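(* Let $K\subseteq L$ be a finite extension of $F$-finite fields of characteristic $p>0$ and let $\mathfrak T\colon L\to K$ be a non-zero $K$-linear map. Then every $K$-linear map $\phi\colon K^{1/p^e}\to K$ has a unique $\mathfrak T$-transpose, i.e. there is a unique $L$-linear map $\phi_{\mathfrak T}\colon L^{1/p^e}\to L$ with $\mathfrak T\circ\phi_{\mathfrak T}=\phi\circ\mathfrak T^{1/p^e}$.
   Context: $K^{1/p^e}\subseteq L^{1/p^e}$ are the fields of $p^e$-th roots in an algebraic closure; $\mathfrak T^{1/p^e}\colon L^{1/p^e}\to K^{1/p^e}$ is $x^{1/p^e}\mapsto\mathfrak T(x)^{1/p^e}$. $F$-finite means $[K:K^p]<\infty$. *)

theory Defs
  imports "HOL-Computational_Algebra.Polynomial"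
begin

text \<open>All fields live inside a fixed algebraically closed ambient field of type 'a.\<close>

definition subfield_of :: "'a::field set \<Rightarrow> bool" where
  "subfield_of K \<longleftrightarrow> 0 \<in> K \<and> 1 \<in> K \<and>
     (\<forall>x\<in>K. \<forall>y\<in>K. x + y \<in> K \<and> x * y \<in> K) \<and>
     (\<forall>x\<in>K. - x \<in> K \<and> inverse x \<in> K)"

definition span_over :: "'a::field set \<Rightarrow> 'a set \<Rightarrow> 'a set" where
  "span_over K S = {(\<Sum>s\<in>S. c s * s) | c. \<forall>s\<in>S. c s \<in> K}"

definition fin_dim_over :: "'a::field set \<Rightarrow> 'a set \<Rightarrow> bool" where
  "fin_dim_over K V \<longleftrightarrow> (\<exists>S. finite S \<and> S \<subseteq> V \<and> V = span_over K S)"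

definition finite_extension :: "'a::field set \<Rightarrow> 'a set \<Rightarrow> bool" where
  "finite_extension K L \<longleftrightarrow> subfield_of K \<and> subfield_of L \<and> K \<subseteq> L \<and> fin_dim_over K L"

definition F_finite :: "'a::field set \<Rightarrow> bool" where
  "F_finite K \<longleftrightarrow> fin_dim_over ((\<lambda>x. x ^ CHAR('a)) ` K) K"

text \<open>K^{1/q}: the q-th roots of elements of K in the ambient algebraically closed field.\<close>
definition root_field :: "nat \<Rightarrow> 'a::field set \<Rightarrow> 'a set" where
  "root_field q K = {x. x ^ q \<in> K}"

definition lin_over :: "'a::field set \<Rightarrow> 'a set \<Rightarrow> 'a set \<Rightarrow> ('a \<Rightarrow> 'a) \<Rightarrow> bool" where
  "lin_over K V W f \<longleftrightarrow> (\<forall>x\<in>V. f x \<in> W) \<and>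
     (\<forall>x\<in>V. \<forall>y\<in>V. f (x + y) = f x + f y) \<and>
     (\<forall>a\<in>K. \<forall>x\<in>V. f (a * x) = a * f x)"

text \<open>T^{1/q} : x^{1/q} \<mapsto> T(x)^{1/q}, i.e. y \<mapsto> (T(y^q))^{1/q}.\<close>
definition root_map :: "nat \<Rightarrow> ('a::field \<Rightarrow> 'a) \<Rightarrow> 'a \<Rightarrow> 'a" where
  "root_map q T y = (THE z. z ^ q = T (y ^ q))"

end

theory Submission
  imports Defs "HOL-Computational_Algebra.Primes"
begin

text \<open>Since [L : K] is finite and T is non-zero, the pairing (c, y) \<mapsto> T (c y) identifies L with
  the K-dual of L: every K-linear form L \<rightarrow> K is y \<mapsto> T (c y) for a unique c \<in> L. For
  v \<in> L^{1/q} the form x \<mapsto> \<phi> (T^{1/q} (x v)) on L is K-linear, so it equals x \<mapsto> T (c x);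
  setting \<psi> v = c gives the transpose, and uniqueness of c makes \<psi> additive, L-linear and
  unique. On the root fields the Frobenius power x \<mapsto> x^q is injective and additive, which
  makes T^{1/q} well defined and K-linear.\<close>

lemma
  assumes "subfield_of K"
  shows subfield_zero: "0 \<in> K"
    and subfield_one: "1 \<in> K"
    and subfield_add: "x \<in> K \<Longrightarrow> y \<in> K \<Longrightarrow> x + y \<in> K"
    and subfield_mult: "x \<in> K \<Longrightarrow> y \<in> K \<Longrightarrow> x * y \<in> K"
    and subfield_uminus: "x \<in> K \<Longrightarrow> - x \<in> K"
    and subfield_inverse: "x \<in> K \<Longrightarrow> inverse x \<in> K"
  using assms unfolding subfield_of_def by blast+

lemma subfield_diff: "subfield_of K \<Longrightarrow> x \<in> K \<Longrightarrow> y \<in> K \<Longrightarrow> x - y \<in> K"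
  by (metis diff_conv_add_uminus subfield_add subfield_uminus)

lemma subfield_divide: "subfield_of K \<Longrightarrow> x \<in> K \<Longrightarrow> y \<in> K \<Longrightarrow> x / y \<in> K"
  by (metis divide_inverse subfield_inverse subfield_mult)

lemma subfield_sum: "subfield_of K \<Longrightarrow> (\<And>i. i \<in> A \<Longrightarrow> f i \<in> K) \<Longrightarrow> sum f A \<in> K"
  by (induction A rule: infinite_finite_induct) (auto intro: subfield_zero subfield_add)

lemma subfield_power: "subfield_of K \<Longrightarrow> x \<in> K \<Longrightarrow> x ^ n \<in> K"
  by (induction n) (auto intro: subfield_one subfield_mult)

lemma
  assumes "lin_over K V W f"
  shows lin_over_closed: "x \<in> V \<Longrightarrow> f x \<in> W"
    and lin_over_add: "x \<in> V \<Longrightarrow> y \<in> V \<Longrightarrow> f (x + y) = f x + f y"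
    and lin_over_scale: "a \<in> K \<Longrightarrow> x \<in> V \<Longrightarrow> f (a * x) = a * f x"
  using assms unfolding lin_over_def by blast+

lemma lin_over_zero: "lin_over K V W f \<Longrightarrow> 0 \<in> V \<Longrightarrow> f 0 = 0"
  using lin_over_add[of K V W f 0 0] by (metis add.right_neutral add_left_cancel)

lemma lin_over_diff:
  "lin_over K V W f \<Longrightarrow> x \<in> V \<Longrightarrow> y \<in> V \<Longrightarrow> x - y \<in> V \<Longrightarrow> f (x - y) = f x - f y"
  using lin_over_add[of K V W f "x - y" y] by (simp add: eq_diff_eq)

lemma lin_over_comp:
  "lin_over K U V f \<Longrightarrow> lin_over K V W g \<Longrightarrow> lin_over K U W (\<lambda>x. g (f x))"
  unfolding lin_over_def by simp

lemma lin_over_mult_right: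
  assumes "subfield_of L" "K \<subseteq> L" "\<And>x. x \<in> L \<Longrightarrow> x * y \<in> V"
  shows "lin_over K L V (\<lambda>x. x * y)"
  using assms unfolding lin_over_def by (auto simp: algebra_simps)

lemma lin_over_mult_left:
  assumes "lin_over K L K T" "subfield_of L" "c \<in> L"
  shows "lin_over K L K (\<lambda>y. T (c * y))"
  unfolding lin_over_def
proof (intro conjI ballI)
  fix a y assume "a \<in> K" "y \<in> L"
  then show "T (c * (a * y)) = a * T (c * y)"
    using assms lin_over_scale[of K L K T a "c * y"] by (simp add: mult.left_commute subfield_mult)
qed (use assms in \<open>auto simp: distrib_left lin_over_def intro: subfield_mult\<close>)

lemma lin_over_scale_add:
  assumes "lin_over K L K f" "lin_over K L K g" "subfield_of K" "a \<in> K"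
  shows "lin_over K L K (\<lambda>y. a * f y + g y)"
  using assms unfolding lin_over_def
  by (auto simp: algebra_simps intro: subfield_add subfield_mult)

lemma lin_over_sum:
  assumes g: "lin_over K L W g" and L: "subfield_of L" and KL: "K \<subseteq> L"
    and "B \<subseteq> L" and "\<forall>b\<in>B. d b \<in> K"
  shows "g (\<Sum>b\<in>B. d b * b) = (\<Sum>b\<in>B. d b * g b)"
  using assms(4,5)
proof (induction B rule: infinite_finite_induct)
  case (insert b B)
  have "(\<Sum>b\<in>B. d b * b) \<in> L" "d b * b \<in> L"
    using insert.prems KL by (auto intro!: subfield_sum subfield_mult L)
  then show ?case
    using insert lin_over_add[OF g] lin_over_scale[OF g, of "d b" b] by auto
qed (simp_all add: lin_over_zero[OF g subfield_zero[OF L]])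

lemma pivot_extension:
  fixes A :: "'e \<Rightarrow> 'u \<Rightarrow> 'a::field" and x' :: "'u \<Rightarrow> 'a"
  assumes "finite U" "v \<notin> U" "A d v \<noteq> 0"
  defines "x \<equiv> \<lambda>u. if u = v then - (\<Sum>u\<in>U. A d u * x' u) / A d v else x' u"
  shows "(\<Sum>u\<in>insert v U. A e u * x u) =
           (\<Sum>u\<in>U. (A e u - A e v * A d u / A d v) * x' u)"
    and "(\<Sum>u\<in>insert v U. A d u * x u) = 0"
proof -
  have x: "(\<Sum>u\<in>insert v U. B u * x u) =
             B v * (- (\<Sum>u\<in>U. A d u * x' u) / A d v) + (\<Sum>u\<in>U. B u * x' u)" for B
    using assms(1,2) by (auto simp: x_def intro!: sum.cong)
  show "(\<Sum>u\<in>insert v U. A e u * x u) =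
          (\<Sum>u\<in>U. (A e u - A e v * A d u / A d v) * x' u)"
    unfolding x by (simp add: algebra_simps sum_subtractf sum_distrib_left sum_divide_distrib)
  show "(\<Sum>u\<in>insert v U. A d u * x u) = 0"
    unfolding x using assms(3) by simp
qed

text \<open>Gaussian elimination: the pivot variable is solved for and the system shrinks by one
  equation and one unknown.\<close>
lemma homogeneous_system_nontrivial_solution:
  fixes A :: "'e \<Rightarrow> 'u \<Rightarrow> 'a::field"
  assumes K: "subfield_of K" and "finite E" "finite U" "card E < card U"
    and "\<forall>e\<in>E. \<forall>u\<in>U. A e u \<in> K"
  shows "\<exists>x. (\<forall>u\<in>U. x u \<in> K) \<and> (\<exists>u\<in>U. x u \<noteq> 0) \<and> (\<forall>e\<in>E. (\<Sum>u\<in>U. A e u * x u) = 0)"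
  using assms(2-5)
proof (induction E arbitrary: U A rule: finite_induct)
  case empty
  then show ?case using subfield_one[OF K] card_gt_0_iff by (intro exI[of _ "\<lambda>_. 1"]) force
next
  case (insert e0 E U A)
  show ?case
  proof (cases "\<forall>u\<in>U. A e0 u = 0")
    case True
    with insert show ?thesis by auto
  next
    case False
    then obtain u0 where u0: "u0 \<in> U" "A e0 u0 \<noteq> 0" by auto
    define U' where "U' = U - {u0}"
    define A' where "A' = (\<lambda>e u. A e u - A e u0 * A e0 u / A e0 u0)"
    have U: "U = insert u0 U'" "u0 \<notin> U'" "finite U'"
      using u0 insert.prems(1) by (auto simp: U'_def)
    have "card E < card U'" using insert.prems(2) insert.hyps U by simp
    moreover have "\<forall>e\<in>E. \<forall>u\<in>U'. A' e u \<in> K"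
      using insert.prems(3) U by (auto simp: A'_def intro!: subfield_diff subfield_mult subfield_divide K)
    ultimately obtain x' where x': "\<forall>u\<in>U'. x' u \<in> K" "\<exists>u\<in>U'. x' u \<noteq> 0"
      "\<forall>e\<in>E. (\<Sum>u\<in>U'. A' e u * x' u) = 0"
      using insert.IH[OF U(3)] by blast
    define x where "x = (\<lambda>u. if u = u0 then - (\<Sum>u\<in>U'. A e0 u * x' u) / A e0 u0 else x' u)"
    have "x u \<in> K" if "u \<in> U" for u
      using that x'(1) insert.prems(3) U u0
      by (auto simp: x_def intro!: subfield_divide subfield_uminus subfield_sum subfield_mult K)
    moreover have "\<exists>u\<in>U. x u \<noteq> 0" using x'(2) U by (auto simp: x_def)
    moreover have "(\<Sum>u\<in>U. A e u * x u) = 0" if "e \<in> insert e0 E" for e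
      using that pivot_extension[where U = U' and v = u0 and A = A and d = e0 and x' = x'] U u0(2) x'(3)
      by (auto simp: x_def A'_def)
    ultimately show ?thesis by blast
  qed
qed

definition indep_over :: "'a::field set \<Rightarrow> 'a set \<Rightarrow> bool" where
  "indep_over K B \<longleftrightarrow>
     (\<forall>c. (\<forall>b\<in>B. c b \<in> K) \<longrightarrow> (\<Sum>b\<in>B. c b * b) = 0 \<longrightarrow> (\<forall>b\<in>B. c b = 0))"

lemma span_over_subset:
  "subfield_of L \<Longrightarrow> K \<subseteq> L \<Longrightarrow> B \<subseteq> L \<Longrightarrow> span_over K B \<subseteq> L"
  unfolding span_over_def by (auto intro!: subfield_sum subfield_mult)

lemma span_over_remove_dependent:
  assumes K: "subfield_of K" and "finite B" and c: "\<forall>b\<in>B. c b \<in> K"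
    and rel: "(\<Sum>b\<in>B. c b * b) = 0" and b0: "b0 \<in> B" "c b0 \<noteq> 0"
  shows "span_over K B \<subseteq> span_over K (B - {b0})"
proof
  fix y assume "y \<in> span_over K B"
  then obtain d where d: "\<forall>b\<in>B. d b \<in> K" and y: "y = (\<Sum>b\<in>B. d b * b)"
    unfolding span_over_def by blast
  define B' where "B' = B - {b0}"
  have B: "B = insert b0 B'" "b0 \<notin> B'" "finite B'" using b0 \<open>finite B\<close> by (auto simp: B'_def)
  have rel': "(\<Sum>b\<in>B'. c b * b) = - (c b0 * b0)"
    using rel B by (simp add: add_eq_0_iff2)
  define d' where "d' = (\<lambda>b. d b - d b0 * c b / c b0)"
  have "(\<Sum>b\<in>B'. d' b * b) = (\<Sum>b\<in>B'. d b * b) - d b0 / c b0 * (\<Sum>b\<in>B'. c b * b)"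
    unfolding d'_def by (simp add: algebra_simps sum_subtractf sum_distrib_left)
  also have "\<dots> = y" using b0(2) y B by (simp add: rel' add.commute)
  finally have "y = (\<Sum>b\<in>B'. d' b * b)" by simp
  moreover have "\<forall>b\<in>B'. d' b \<in> K"
    using d c B by (auto simp: d'_def intro!: subfield_diff subfield_divide subfield_mult K)
  ultimately show "y \<in> span_over K B'" unfolding span_over_def by blast
qed

text \<open>A spanning set of least cardinality is independent.\<close>
lemma finite_extension_has_basis:
  assumes "finite_extension K L"
  shows "\<exists>B. finite B \<and> B \<subseteq> L \<and> L = span_over K B \<and> indep_over K B"
proof -
  have K: "subfield_of K" and L: "subfield_of L" and KL: "K \<subseteq> L"
    using assms by (auto simp: finite_extension_def)
  obtain S where S: "finite S" "S \<subseteq> L" "L = span_over K S"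
    using assms by (auto simp: finite_extension_def fin_dim_over_def)
  define P where "P = (\<lambda>B. B \<subseteq> S \<and> L = span_over K B)"
  obtain B where "P B" and min: "\<And>B'. P B' \<Longrightarrow> card B \<le> card B'"
    using ex_has_least_nat[of P S card] S by (auto simp: P_def)
  then have BS: "B \<subseteq> S" and LB: "L = span_over K B" by (auto simp: P_def)
  have B: "finite B" "B \<subseteq> L" using BS S finite_subset by auto
  have "indep_over K B"
    unfolding indep_over_def
  proof (intro allI impI ballI, rule ccontr)
    fix c b0
    assume "\<forall>b\<in>B. c b \<in> K" "(\<Sum>b\<in>B. c b * b) = 0" "b0 \<in> B" "c b0 \<noteq> 0"
    then have "span_over K B \<subseteq> span_over K (B - {b0})"
      using span_over_remove_dependent[OF K B(1)] by blast
    moreover have "span_over K (B - {b0}) \<subseteq> L" using span_over_subset[OF L KL] B by blast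
    ultimately have "P (B - {b0})" using BS LB by (auto simp: P_def)
    then have "card B \<le> card (B - {b0})" by (rule min)
    with card_Diff1_less[OF B(1) \<open>b0 \<in> B\<close>] show False by linarith
  qed
  with B LB show ?thesis by blast
qed

lemma lin_over_eq_zero_on_span:
  assumes "lin_over K L K g" "subfield_of L" "K \<subseteq> L" "B \<subseteq> L" "L = span_over K B"
    and "\<forall>b\<in>B. g b = 0" and "y \<in> L"
  shows "g y = 0"
proof -
  obtain d where "\<forall>b\<in>B. d b \<in> K" "y = (\<Sum>b\<in>B. d b * b)"
    using assms(5,7) unfolding span_over_def by blast
  with lin_over_sum[OF assms(1-4)] assms(6) show ?thesis by simp
qed

lemma pairing_nondegenerate:
  assumes "subfield_of L" "\<exists>x\<in>L. T x \<noteq> 0" "c \<in> L" "\<forall>y\<in>L. T (c * y) = 0"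
  shows "c = 0"
proof (rule ccontr)
  assume "c \<noteq> 0"
  obtain x where "x \<in> L" "T x \<noteq> 0" using assms(2) by blast
  moreover have "T (c * (inverse c * x)) = T x" using \<open>c \<noteq> 0\<close> by (simp add: field_simps)
  moreover have "inverse c * x \<in> L" using assms \<open>x \<in> L\<close> by (auto intro: subfield_mult subfield_inverse)
  ultimately show False using assms(4) by metis
qed

lemma pairing_injective:
  assumes "finite_extension K L" "lin_over K L K T" "\<exists>x\<in>L. T x \<noteq> 0"
    and "c1 \<in> L" "c2 \<in> L" "\<forall>y\<in>L. T (c1 * y) = T (c2 * y)"
  shows "c1 = c2"
proof -
  have L: "subfield_of L" using assms(1) by (simp add: finite_extension_def)
  have "\<forall>y\<in>L. T ((c1 - c2) * y) = 0"
    using lin_over_diff[OF assms(2)] assms(4-6)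
    by (simp add: left_diff_distrib subfield_mult subfield_diff L)
  then have "c1 - c2 = 0"
    using pairing_nondegenerate[OF L assms(3) subfield_diff[OF L assms(4,5)]] by blast
  then show ?thesis by simp
qed

text \<open>The unknowns are a = x None and the coordinates x (Some b) of c, one more than the
  equations "a * f b + T (c * b) = 0" for b in a basis B.\<close>
lemma lin_over_dependent_on_pairing:
  assumes ext: "finite_extension K L" and T: "lin_over K L K T" and f: "lin_over K L K f"
  shows "\<exists>a c. a \<in> K \<and> c \<in> L \<and> (a \<noteq> 0 \<or> c \<noteq> 0) \<and> (\<forall>y\<in>L. a * f y + T (c * y) = 0)"
proof -
  have K: "subfield_of K" and L: "subfield_of L" and KL: "K \<subseteq> L"
    using ext by (auto simp: finite_extension_def)
  obtain B where B: "finite B" "B \<subseteq> L" "L = span_over K B" "indep_over K B"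
    using finite_extension_has_basis[OF ext] by blast
  define U where "U = insert None (Some ` B)"
  define A where "A = (\<lambda>b u. case u of None \<Rightarrow> f b | Some b' \<Rightarrow> T (b * b'))"
  have AK: "\<forall>b\<in>B. \<forall>u\<in>U. A b u \<in> K"
    using B(2) lin_over_closed[OF f] lin_over_closed[OF T] subfield_mult[OF L]
    by (auto simp: U_def A_def subset_iff)
  have U: "finite U" "card B < card U" using B(1) by (simp_all add: U_def card_image)
  obtain x where xK: "\<forall>u\<in>U. x u \<in> K" and xnz: "\<exists>u\<in>U. x u \<noteq> 0"
    and xs: "\<forall>b\<in>B. (\<Sum>u\<in>U. A b u * x u) = 0"
    using homogeneous_system_nontrivial_solution[OF K B(1) U AK] by blast
  have xS: "\<forall>b\<in>B. x (Some b) \<in> K" and xN: "x None \<in> K" using xK by (auto simp: U_def)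
  define c where "c = (\<Sum>b\<in>B. x (Some b) * b)"
  have cL: "c \<in> L" using xS KL B(2) by (auto simp: c_def intro!: subfield_sum subfield_mult L)
  have "x None * f b + T (c * b) = 0" if b: "b \<in> B" for b
  proof -
    have "b \<in> L" using b B(2) by blast
    have "T (c * b) = T (b * (\<Sum>b'\<in>B. x (Some b') * b'))" by (simp add: c_def mult.commute)
    also have "\<dots> = (\<Sum>b'\<in>B. x (Some b') * T (b * b'))"
      using lin_over_sum[OF lin_over_mult_left[OF T L \<open>b \<in> L\<close>] L KL B(2) xS] .
    also have "\<dots> = (\<Sum>b'\<in>B. T (b * b') * x (Some b'))" by (simp add: mult.commute)
    finally have "x None * f b + T (c * b) = f b * x None + (\<Sum>b'\<in>B. T (b * b') * x (Some b'))"
      by (simp add: mult.commute)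
    also have "\<dots> = (\<Sum>u\<in>U. A b u * x u)" using B(1) by (simp add: U_def A_def sum.reindex)
    finally show ?thesis using xs b by simp
  qed
  then have "\<forall>y\<in>L. x None * f y + T (c * y) = 0"
    using lin_over_eq_zero_on_span[OF lin_over_scale_add[OF f lin_over_mult_left[OF T L cL] K xN]
        L KL B(2,3)] by blast
  moreover have "x None \<noteq> 0 \<or> c \<noteq> 0"
  proof (rule ccontr)
    assume "\<not> (x None \<noteq> 0 \<or> c \<noteq> 0)"
    then have "\<forall>b\<in>B. x (Some b) = 0" and "x None = 0"
      using B(4) xS unfolding indep_over_def c_def by auto
    with xnz show False by (auto simp: U_def)
  qed
  ultimately show ?thesis using xN cL by blast
qed

lemma lin_over_represented_by_pairing:
  assumes ext: "finite_extension K L" and T: "lin_over K L K T" and T_nonzero: "\<exists>x\<in>L. T x \<noteq> 0"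
    and f: "lin_over K L K f"
  shows "\<exists>c\<in>L. \<forall>y\<in>L. f y = T (c * y)"
proof -
  have K: "subfield_of K" and L: "subfield_of L" and KL: "K \<subseteq> L"
    using ext by (auto simp: finite_extension_def)
  obtain a c where a: "a \<in> K" and c: "c \<in> L" and "a \<noteq> 0 \<or> c \<noteq> 0"
    and rel: "\<forall>y\<in>L. a * f y + T (c * y) = 0"
    using lin_over_dependent_on_pairing[OF ext T f] by blast
  moreover have "a = 0 \<Longrightarrow> c = 0" using pairing_nondegenerate[OF L T_nonzero c] rel by simp
  ultimately have "a \<noteq> 0" by blast
  have "- 1 / a \<in> K" using a by (auto intro!: subfield_divide subfield_uminus subfield_one K)
  have "f y = T (- c / a * y)" if y: "y \<in> L" for y
  proof -
    have "T (- c / a * y) = (- 1 / a) * T (c * y)"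
      using lin_over_scale[OF T \<open>- 1 / a \<in> K\<close>, of "c * y"] y c by (simp add: subfield_mult L)
    also have "\<dots> = (- 1 / a) * (- (a * f y))" using rel y by (simp add: add_eq_0_iff2)
    also have "\<dots> = f y" using \<open>a \<noteq> 0\<close> by (simp add: field_simps)
    finally show ?thesis by simp
  qed
  moreover have "- c / a \<in> L" using a c KL by (auto intro!: subfield_divide subfield_uminus L)
  ultimately show ?thesis by blast
qed

lemma transpose_unique:
  assumes ext: "finite_extension K L" and T: "lin_over K L K T" and T_nonzero: "\<exists>x\<in>L. T x \<noteq> 0"
    and V: "\<And>a v. a \<in> L \<Longrightarrow> v \<in> V \<Longrightarrow> a * v \<in> V"
    and \<psi>1: "lin_over L V L \<psi>1" and \<psi>2: "lin_over L V L \<psi>2"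
    and eq: "\<forall>v\<in>V. T (\<psi>1 v) = T (\<psi>2 v)" and v: "v \<in> V"
  shows "\<psi>1 v = \<psi>2 v"
proof (rule pairing_injective[OF ext T T_nonzero])
  show "\<psi>1 v \<in> L" "\<psi>2 v \<in> L" using lin_over_closed \<psi>1 \<psi>2 v by blast+
  show "\<forall>y\<in>L. T (\<psi>1 v * y) = T (\<psi>2 v * y)"
    using eq V v lin_over_scale[OF \<psi>1] lin_over_scale[OF \<psi>2] by (metis mult.commute)
qed

lemma transpose_exists:
  assumes ext: "finite_extension K L" and T: "lin_over K L K T" and T_nonzero: "\<exists>x\<in>L. T x \<noteq> 0"
    and V_mult: "\<And>a v. a \<in> L \<Longrightarrow> v \<in> V \<Longrightarrow> a * v \<in> V"
    and V_add: "\<And>v w. v \<in> V \<Longrightarrow> w \<in> V \<Longrightarrow> v + w \<in> V"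
    and \<Phi>: "lin_over K V K \<Phi>"
  shows "\<exists>\<psi>. lin_over L V L \<psi> \<and> (\<forall>v\<in>V. T (\<psi> v) = \<Phi> v)"
proof -
  have L: "subfield_of L" and KL: "K \<subseteq> L" using ext by (auto simp: finite_extension_def)
  define \<psi> where "\<psi> = (\<lambda>v. SOME c. c \<in> L \<and> (\<forall>x\<in>L. \<Phi> (x * v) = T (c * x)))"
  have \<psi>: "\<psi> v \<in> L \<and> (\<forall>x\<in>L. \<Phi> (x * v) = T (\<psi> v * x))" if v: "v \<in> V" for v
  proof -
    have "lin_over K L K (\<lambda>x. \<Phi> (x * v))"
      using lin_over_comp[OF lin_over_mult_right[OF L KL] \<Phi>] V_mult v by blast
    then have "\<exists>c. c \<in> L \<and> (\<forall>x\<in>L. \<Phi> (x * v) = T (c * x))"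
      using lin_over_represented_by_pairing[OF ext T T_nonzero] by blast
    then show ?thesis unfolding \<psi>_def by (rule someI_ex)
  qed
  have \<psi>_eqI: "\<psi> v = c" if "v \<in> V" "c \<in> L" "\<forall>x\<in>L. \<Phi> (x * v) = T (c * x)" for v c
    using pairing_injective[OF ext T T_nonzero, of "\<psi> v" c] \<psi> that by auto
  have "lin_over L V L \<psi>"
    unfolding lin_over_def
  proof (intro conjI ballI)
    fix v assume "v \<in> V" then show "\<psi> v \<in> L" using \<psi> by blast
  next
    fix v w assume v: "v \<in> V" and w: "w \<in> V"
    have "\<Phi> (x * (v + w)) = T ((\<psi> v + \<psi> w) * x)" if x: "x \<in> L" for x
      using lin_over_add[OF \<Phi>] lin_over_add[OF T] \<psi>[OF v] \<psi>[OF w] V_mult x v w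
      by (simp add: distrib_left distrib_right subfield_mult L)
    then show "\<psi> (v + w) = \<psi> v + \<psi> w"
      using \<psi>_eqI[OF V_add[OF v w]] \<psi> v w by (simp add: subfield_add L)
  next
    fix a v assume a: "a \<in> L" and v: "v \<in> V"
    have "\<Phi> (x * (a * v)) = T (a * \<psi> v * x)" if x: "x \<in> L" for x
    proof -
      have "\<Phi> (x * (a * v)) = \<Phi> ((x * a) * v)" by (simp add: mult.assoc)
      also have "\<dots> = T (\<psi> v * (x * a))" using \<psi>[OF v] subfield_mult[OF L x a] by blast
      finally show ?thesis by (simp add: ac_simps)
    qed
    then show "\<psi> (a * v) = a * \<psi> v"
      using \<psi>_eqI[OF V_mult[OF a v]] \<psi> a v by (simp add: subfield_mult L)
  qed
  moreover have "T (\<psi> v) = \<Phi> v" if "v \<in> V" for v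
    using \<psi>[OF that] subfield_one[OF L] by force
  ultimately show ?thesis by blast
qed

lemma frobenius_power_inj:
  assumes "prime CHAR('a::field)" "q = CHAR('a) ^ e" "(x::'a) ^ q = y ^ q"
  shows "x = y"
proof -
  have "x ^ q = (x - y) ^ q + y ^ q" using freshmans_dream'[OF assms(1,2), of "x - y" y] by simp
  with assms show ?thesis by simp
qed

lemma subfield_root_field:
  assumes p: "prime CHAR('a::field)" and q: "q = CHAR('a) ^ e" and L: "subfield_of (L :: 'a set)"
  shows "subfield_of (root_field q L)"
proof -
  have "q > 0" using p q by (simp add: prime_gt_0_nat)
  moreover have "(- x) ^ q = - (x ^ q)" for x :: 'a
    using freshmans_dream'[OF p q, of "- x" x] \<open>q > 0\<close> by (simp add: eq_neg_iff_add_eq_0 power_0_left)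
  ultimately show ?thesis
    using L by (auto simp: subfield_of_def root_field_def freshmans_dream'[OF p q]
                     power_mult_distrib power_inverse power_0_left)
qed

lemma subset_root_field: "subfield_of L \<Longrightarrow> L \<subseteq> root_field q L"
  by (auto simp: root_field_def subfield_power)

lemma root_map_power:
  fixes T :: "'a::alg_closed_field \<Rightarrow> 'a"
  assumes "prime CHAR('a)" "q = CHAR('a) ^ e"
  shows "root_map q T y ^ q = T (y ^ q)"
proof -
  have "q > 0" using assms by (simp add: prime_gt_0_nat)
  then obtain z where "z ^ q = T (y ^ q)" using nth_root_exists by blast
  then have "\<exists>!z. z ^ q = T (y ^ q)" using frobenius_power_inj[OF assms] by metis
  then show ?thesis unfolding root_map_def by (rule theI')
qed

lemma root_map_eqI:
  fixes T :: "'a::alg_closed_field \<Rightarrow> 'a"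
  assumes "prime CHAR('a)" "q = CHAR('a) ^ e" "z ^ q = T (y ^ q)"
  shows "root_map q T y = z"
  using frobenius_power_inj[OF assms(1,2)] root_map_power[OF assms(1,2)] assms(3) by metis

lemma lin_over_root_map:
  fixes T :: "'a::alg_closed_field \<Rightarrow> 'a"
  assumes p: "prime CHAR('a)" and q: "q = CHAR('a) ^ e"
    and K: "subfield_of K" and T: "lin_over K L K T"
  shows "lin_over K (root_field q L) (root_field q K) (root_map q T)"
  unfolding lin_over_def
proof (intro conjI ballI)
  fix y assume "y \<in> root_field q L"
  then show "root_map q T y \<in> root_field q K"
    using lin_over_closed[OF T] by (simp add: root_field_def root_map_power[OF p q])
next
  fix y z assume "y \<in> root_field q L" "z \<in> root_field q L"
  then show "root_map q T (y + z) = root_map q T y + root_map q T z"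
    using lin_over_add[OF T]
    by (intro root_map_eqI[OF p q]) (simp add: root_field_def freshmans_dream'[OF p q] root_map_power[OF p q])
next
  fix a y assume "a \<in> K" "y \<in> root_field q L"
  then show "root_map q T (a * y) = a * root_map q T y"
    using lin_over_scale[OF T, of "a ^ q"] subfield_power[OF K]
    by (intro root_map_eqI[OF p q]) (simp add: root_field_def power_mult_distrib root_map_power[OF p q])
qed

theorem proposition5p4:
  fixes K L :: "'a::alg_closed_field set"
    and T \<phi> :: "'a \<Rightarrow> 'a"
    and p e :: nat
  assumes "prime p" and "CHAR('a) = p"
    and "finite_extension K L"
    and "F_finite K" and "F_finite L"
    and "lin_over K L K T" and "\<exists>x\<in>L. T x \<noteq> 0"
    and "lin_over K (root_field (p ^ e) K) K \<phi>"
  shows "\<exists>\<psi>. lin_over L (root_field (p ^ e) L) L \<psi> \<and>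
           (\<forall>y\<in>root_field (p ^ e) L. T (\<psi> y) = \<phi> (root_map (p ^ e) T y)) \<and>
           (\<forall>\<psi>'. lin_over L (root_field (p ^ e) L) L \<psi>' \<and>
                 (\<forall>y\<in>root_field (p ^ e) L. T (\<psi>' y) = \<phi> (root_map (p ^ e) T y))
                 \<longrightarrow> (\<forall>y\<in>root_field (p ^ e) L. \<psi>' y = \<psi> y))"
proof -
  define q where "q = p ^ e"
  have p: "prime CHAR('a)" and q: "q = CHAR('a) ^ e" using assms(1,2) by (simp_all add: q_def)
  have K: "subfield_of K" and L: "subfield_of L"
    using assms(3) by (auto simp: finite_extension_def)
  let ?V = "root_field q L"
  have V: "subfield_of ?V" "L \<subseteq> ?V" using subfield_root_field[OF p q L] subset_root_field[OF L] .
  have V_mult: "a * v \<in> ?V" if "a \<in> L" "v \<in> ?V" for a v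
    using subfield_mult[OF V(1)] V(2) that by blast
  have V_add: "v + w \<in> ?V" if "v \<in> ?V" "w \<in> ?V" for v w
    using subfield_add[OF V(1)] that .
  have "lin_over K ?V K (\<lambda>y. \<phi> (root_map q T y))"
    using lin_over_comp[OF lin_over_root_map[OF p q K assms(6)]] assms(8) by (simp add: q_def)
  then obtain \<psi> where \<psi>: "lin_over L ?V L \<psi>" "\<forall>y\<in>?V. T (\<psi> y) = \<phi> (root_map q T y)"
    using transpose_exists[OF assms(3,6,7) V_mult V_add] by blast
  moreover have "\<psi>' y = \<psi> y"
    if "lin_over L ?V L \<psi>'" "\<forall>y\<in>?V. T (\<psi>' y) = \<phi> (root_map q T y)" "y \<in> ?V" for \<psi>' y
    using transpose_unique[OF assms(3,6,7) V_mult that(1) \<psi>(1)] that(2,3) \<psi>(2) by auto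
  ultimately show ?thesis unfolding q_def by blast
qed

end
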